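(* Let $R$ be a commutative multiplicative hyperring with identity $1$, let $\alpha$ be a good endomorphism of $R$, and let $I$ be an $\alpha$-prime hyperideal of $R$. Then $\alpha(I)\subseteq I$.
   Context: A multiplicative hyperring is an abelian group $(R,+)$ with a hyperoperation $\circ:R\times R\to \mathcal P^*(R)$ (nonempty subsets) such that $a\circ(b\circ c)=(a\circ b)\circ c$, $a\circ(b+c)\subseteq a\circ b+a\circ c$, $(b+c)\circ a\subseteq b\circ a+c\circ a$, and $a\circ(-b)=(-a)\circ b=-(a\circ b)$. Products of subsets are unions of elementwise products. Commutative means $a\circ b=b\circ a$. An identity $1$ satisfies $a\in1\circ a$ for all $a$. A hyperideal is a nonempty $I\subseteq R$ closed under subtraction with $r\circ x\subseteq I$ for $r\in R$, $x\in I$. Standing assumption: every hyperideal is a $\mathbf C$-hyperideal, i.e. for every finite product $A=r_1\circ\cdots\circ r_n$, $A\cap I\neq\emptyset$ implies $A\subseteq I$. A good endomorphism $\alpha$ satisfies $\alpha(x+y)=\alpha(x)+\alpha(y)$ and $\alpha(x\circ y)=\alpha(x)\circ\alpha(y)$. A hyperideal $I$ is $\alpha$-prime if for all $x,y\in R$, $x\circ y\subseteq I$ implies $x\in I$ or $\alpha(y)\in I$. *)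

theory Defs
  imports Main
begin

definition setmul :: "('a \<Rightarrow> 'a \<Rightarrow> 'a set) \<Rightarrow> 'a set \<Rightarrow> 'a set \<Rightarrow> 'a set" where
  "setmul m A B = (\<Union>a\<in>A. \<Union>b\<in>B. m a b)"

definition setplus :: "'a::plus set \<Rightarrow> 'a set \<Rightarrow> 'a set" where
  "setplus A B = {x + y | x y. x \<in> A \<and> y \<in> B}"

definition mult_hyperring :: "('a::ab_group_add \<Rightarrow> 'a \<Rightarrow> 'a set) \<Rightarrow> bool" where
  "mult_hyperring m \<longleftrightarrow>
     (\<forall>a b. m a b \<noteq> {}) \<and>
     (\<forall>a b c. setmul m {a} (m b c) = setmul m (m a b) {c}) \<and>
     (\<forall>a b c. m a (b + c) \<subseteq> setplus (m a b) (m a c)) \<and>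
     (\<forall>a b c. m (b + c) a \<subseteq> setplus (m b a) (m c a)) \<and>
     (\<forall>a b. m a (- b) = uminus ` (m a b) \<and> m (- a) b = uminus ` (m a b))"

definition hcomm :: "('a \<Rightarrow> 'a \<Rightarrow> 'a set) \<Rightarrow> bool" where
  "hcomm m \<longleftrightarrow> (\<forall>a b. m a b = m b a)"

definition hidentity :: "('a \<Rightarrow> 'a \<Rightarrow> 'a set) \<Rightarrow> 'a \<Rightarrow> bool" where
  "hidentity m e \<longleftrightarrow> (\<forall>a. a \<in> m e a)"

definition hyperideal :: "('a::ab_group_add \<Rightarrow> 'a \<Rightarrow> 'a set) \<Rightarrow> 'a set \<Rightarrow> bool" where
  "hyperideal m I \<longleftrightarrow> I \<noteq> {} \<and> (\<forall>x\<in>I. \<forall>y\<in>I. x - y \<in> I) \<and>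
     (\<forall>r x. x \<in> I \<longrightarrow> m r x \<subseteq> I)"

fun hprod :: "('a \<Rightarrow> 'a \<Rightarrow> 'a set) \<Rightarrow> 'a list \<Rightarrow> 'a set" where
  "hprod m [] = {}"
| "hprod m [r] = {r}"
| "hprod m (r # s # rs) = setmul m {r} (hprod m (s # rs))"

definition C_hyperideal :: "('a::ab_group_add \<Rightarrow> 'a \<Rightarrow> 'a set) \<Rightarrow> 'a set \<Rightarrow> bool" where
  "C_hyperideal m I \<longleftrightarrow> hyperideal m I \<and>
     (\<forall>rs. rs \<noteq> [] \<longrightarrow> hprod m rs \<inter> I \<noteq> {} \<longrightarrow> hprod m rs \<subseteq> I)"

definition good_endo :: "('a::ab_group_add \<Rightarrow> 'a \<Rightarrow> 'a set) \<Rightarrow> ('a \<Rightarrow> 'a) \<Rightarrow> bool" where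
  "good_endo m \<alpha> \<longleftrightarrow> (\<forall>x y. \<alpha> (x + y) = \<alpha> x + \<alpha> y) \<and>
     (\<forall>x y. \<alpha> ` (m x y) = m (\<alpha> x) (\<alpha> y))"

definition alpha_prime :: "('a::ab_group_add \<Rightarrow> 'a \<Rightarrow> 'a set) \<Rightarrow> ('a \<Rightarrow> 'a) \<Rightarrow> 'a set \<Rightarrow> bool" where
  "alpha_prime m \<alpha> I \<longleftrightarrow> hyperideal m I \<and>
     (\<forall>x y. m x y \<subseteq> I \<longrightarrow> x \<in> I \<or> \<alpha> y \<in> I)"

end

theory Submission
  imports Defs
begin

lemma hyperideal_eq_UNIV_if_identity_mem:
  assumes "hcomm m" and "hidentity m e" and "hyperideal m I" and "e \<in> I"
  shows "I = UNIV"
proof (rule UNIV_eq_I [symmetric])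
  fix a
  have "a \<in> m e a" using \<open>hidentity m e\<close> unfolding hidentity_def by blast
  also have "\<dots> = m a e" using \<open>hcomm m\<close> unfolding hcomm_def by blast
  also have "\<dots> \<subseteq> I" using \<open>hyperideal m I\<close> \<open>e \<in> I\<close> unfolding hyperideal_def by blast
  finally show "a \<in> I" .
qed

lemma alpha_prime_mem_or_image_mem:
  assumes "x \<in> I" and "alpha_prime m \<alpha> I"
  shows "r \<in> I \<or> \<alpha> x \<in> I"
proof -
  have "m r x \<subseteq> I" using assms unfolding alpha_prime_def hyperideal_def by blast
  then show ?thesis using \<open>alpha_prime m \<alpha> I\<close> unfolding alpha_prime_def by blast
qed

theorem mainTheorem3:
  fixes m :: "'a::ab_group_add \<Rightarrow> 'a \<Rightarrow> 'a set"
    and one :: 'a and \<alpha> :: "'a \<Rightarrow> 'a" and I :: "'a set"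
  assumes "mult_hyperring m"
    and "hcomm m"
    and "hidentity m one"
    and "\<forall>J. hyperideal m J \<longrightarrow> C_hyperideal m J"
    and "good_endo m \<alpha>"
    and "alpha_prime m \<alpha> I"
  shows "\<alpha> ` I \<subseteq> I"
proof (intro image_subsetI)
  have "hyperideal m I" using \<open>alpha_prime m \<alpha> I\<close> unfolding alpha_prime_def by blast
  fix x assume "x \<in> I"
  then have "one \<in> I \<or> \<alpha> x \<in> I"
    using \<open>alpha_prime m \<alpha> I\<close> by (rule alpha_prime_mem_or_image_mem)
  moreover have "I = UNIV" if "one \<in> I"
    using assms(2,3) \<open>hyperideal m I\<close> that by (rule hyperideal_eq_UNIV_if_identity_mem)
  ultimately show "\<alpha> x \<in> I" by blast
qed

end
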